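(* For every integer $n\ge 4$, the disjunctive domination number of the torus grid graph $C_4\Box C_n$ is $$\gamma_2^d(C_4\Box C_n)=\begin{cases}\dfrac{n}{2}+1, & n\equiv 2\pmod 4,\\[2mm] \left\lceil \dfrac{n}{2}\right\rceil, & \text{otherwise}.\end{cases}$$
   Context: $C_k$ denotes the cycle on $k$ vertices, and $G\Box H$ is the Cartesian product: vertex set $V(G)\times V(H)$, with $(g,h)\sim(g',h')$ iff either $g=g'$ and $hh'\in E(H)$, or $h=h'$ and $gg'\in E(G)$. For a simple graph $\Gamma$ and a vertex $v$, let $\Gamma(v)$ be the set of vertices at distance $1$ from $v$ and $\Gamma_2(v)$ the set of vertices at distance exactly $2$ from $v$. A set $S\subseteq V(\Gamma)$ is a disjunctive dominating set if every vertex $v\notin S$ satisfies $|\Gamma(v)\cap S|\ge 1$ or $|\Gamma_2(v)\cap S|\ge 2$. The disjunctive domination number $\gamma_2^d(\Gamma)$ is the minimum cardinality of a disjunctive dominating set of $\Gamma$. *)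

theory Defs
  imports Main
begin

text \<open>A simple graph is given by a vertex set V and an adjacency relation E
  (assumed symmetric and irreflexive on V for the graphs used below).\<close>

definition nbhd :: "'a set \<Rightarrow> ('a \<Rightarrow> 'a \<Rightarrow> bool) \<Rightarrow> 'a \<Rightarrow> 'a set" where
  "nbhd V E v = {w \<in> V. E v w}"

definition nbhd2 :: "'a set \<Rightarrow> ('a \<Rightarrow> 'a \<Rightarrow> bool) \<Rightarrow> 'a \<Rightarrow> 'a set" where
  "nbhd2 V E v = {w \<in> V. w \<noteq> v \<and> \<not> E v w \<and> (\<exists>u\<in>V. E v u \<and> E u w)}"

definition disj_dom_set :: "'a set \<Rightarrow> ('a \<Rightarrow> 'a \<Rightarrow> bool) \<Rightarrow> 'a set \<Rightarrow> bool" where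
  "disj_dom_set V E S \<longleftrightarrow> S \<subseteq> V \<and>
     (\<forall>v\<in>V - S. card (nbhd V E v \<inter> S) \<ge> 1 \<or> card (nbhd2 V E v \<inter> S) \<ge> 2)"

definition disj_dom_num :: "'a set \<Rightarrow> ('a \<Rightarrow> 'a \<Rightarrow> bool) \<Rightarrow> nat" where
  "disj_dom_num V E = (LEAST k. \<exists>S. disj_dom_set V E S \<and> card S = k)"

definition cycle_V :: "nat \<Rightarrow> nat set" where
  "cycle_V k = {0..<k}"

definition cycle_E :: "nat \<Rightarrow> nat \<Rightarrow> nat \<Rightarrow> bool" where
  "cycle_E k i j \<longleftrightarrow> i < k \<and> j < k \<and> (j = (i + 1) mod k \<or> i = (j + 1) mod k)"

definition cart_V :: "'a set \<Rightarrow> 'b set \<Rightarrow> ('a \<times> 'b) set" where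
  "cart_V V1 V2 = V1 \<times> V2"

definition cart_E :: "('a \<Rightarrow> 'a \<Rightarrow> bool) \<Rightarrow> ('b \<Rightarrow> 'b \<Rightarrow> bool) \<Rightarrow> 'a \<times> 'b \<Rightarrow> 'a \<times> 'b \<Rightarrow> bool" where
  "cart_E E1 E2 p q \<longleftrightarrow>
     (fst p = fst q \<and> E2 (snd p) (snd q)) \<or> (snd p = snd q \<and> E1 (fst p) (fst q))"

end

theory Submission
  imports Defs
begin

text \<open>Lower bound by discharging. A vertex of a disjunctive dominating set S in column j of
  C_4 \<box> C_n sends charge 6 to column j, 4 to each of the columns j \<plusminus> 1 and 1 to each of the
  columns j \<plusminus> 2, so the columns receive 16|S| in total. A finite check on a window of a few
  columns shows that every column receives at least 8, hence n \<le> 2|S|. If n = 2|S|, every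
  column receives exactly 8, and a second finite check shows that column j + 2 is then column j
  rotated by two rows. For n \<equiv> 2 (mod 4), going once around the torus composes an odd number of
  these rotations, so every column is invariant under the rotation by two rows, and a third
  finite check rules out such a pattern.

  Upper bound: row 0 in the columns \<equiv> 0 and row 2 in the columns \<equiv> 2 (mod 4), plus the vertex
  (2, 0) when n \<equiv> 2 (mod 4).\<close>

section \<open>Dominating patterns on the cylinder\<close>

text \<open>A pattern x describes a subset of the cylinder C_4 \<box> \<int>: x k r says whether the vertex in
  column k and row r mod 4 is chosen. The seven vertices at distance two are counted with
  multiplicity, since on a short torus some of them coincide.\<close>

definition dominated_at :: "(int \<Rightarrow> int \<Rightarrow> bool) \<Rightarrow> int \<Rightarrow> int \<Rightarrow> bool" where
  "dominated_at x k r \<longleftrightarrow>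
     x k r \<or> x k ((r + 1) mod 4) \<or> x k ((r - 1) mod 4) \<or> x (k + 1) r \<or> x (k - 1) r \<or>
     2 \<le> (of_bool (x k ((r + 2) mod 4)) + of_bool (x (k + 1) ((r + 1) mod 4))
        + of_bool (x (k + 1) ((r - 1) mod 4)) + of_bool (x (k - 1) ((r + 1) mod 4))
        + of_bool (x (k - 1) ((r - 1) mod 4)) + of_bool (x (k + 2) r) + of_bool (x (k - 2) r) :: int)"

definition column_dominated :: "(int \<Rightarrow> int \<Rightarrow> bool) \<Rightarrow> int \<Rightarrow> bool" where
  "column_dominated x k \<longleftrightarrow> dominated_at x k 0 \<and> dominated_at x k 1 \<and> dominated_at x k 2 \<and> dominated_at x k 3"

definition column_count :: "(int \<Rightarrow> int \<Rightarrow> bool) \<Rightarrow> int \<Rightarrow> int" where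
  "column_count x k = of_bool (x k 0) + of_bool (x k 1) + of_bool (x k 2) + of_bool (x k 3)"

definition weight :: "(int \<Rightarrow> int \<Rightarrow> bool) \<Rightarrow> int \<Rightarrow> int" where
  "weight x k = 6 * column_count x k + 4 * (column_count x (k - 1) + column_count x (k + 1))
     + column_count x (k - 2) + column_count x (k + 2)"

lemmas dominated_at_rows = dominated_at_def[where r=0, simplified] dominated_at_def[where r=1, simplified]
  dominated_at_def[where r=2, simplified] dominated_at_def[where r=3, simplified]

text \<open>The next three facts only involve x on columns -4 to 4; they are finite checks, left to an
  SMT solver.\<close>

declare [[smt_timeout = 300]]

lemma weight_ge_8_at_origin:
  assumes "column_dominated x (-1)" "column_dominated x 0" "column_dominated x 1"
  shows "8 \<le> weight x 0"
  using assms unfolding column_dominated_def dominated_at_rows weight_def column_count_def of_bool_def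
  by (smt (z3))

lemma tight_rotates_at_origin:
  assumes "column_dominated x (-2)" "column_dominated x (-1)" "column_dominated x 0"
    "column_dominated x 1" "column_dominated x 2"
    "weight x (-1) = 8" "weight x 0 = 8" "weight x 1 = 8"
  shows "x 2 0 = x 0 2 \<and> x 2 1 = x 0 3 \<and> x 2 2 = x 0 0 \<and> x 2 3 = x 0 1"
  using assms unfolding column_dominated_def dominated_at_rows weight_def column_count_def of_bool_def
  by (smt (z3))

lemma no_tight_rotation_invariant_at_origin:
  assumes "\<And>k. x k 2 = x k 0" "\<And>k. x k 3 = x k 1"
    "column_dominated x (-1)" "column_dominated x 0" "column_dominated x 1" "column_dominated x 2"
    "weight x 0 = 8" "weight x 1 = 8"
  shows False
  using assms(3-) unfolding column_dominated_def dominated_at_rows weight_def column_count_def of_bool_def assms(1,2)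
  by (smt (z3))

lemma column_dominated_shift: "column_dominated (\<lambda>j. x (k + j)) j \<longleftrightarrow> column_dominated x (k + j)"
  by (simp add: column_dominated_def dominated_at_def algebra_simps)

lemma weight_shift: "weight (\<lambda>j. x (k + j)) j = weight x (k + j)"
  by (simp add: weight_def column_count_def algebra_simps)

lemma weight_ge_8:
  assumes "\<And>k. column_dominated x k"
  shows "8 \<le> weight x k"
  using weight_ge_8_at_origin[of "\<lambda>j. x (k + j)"] by (simp add: column_dominated_shift weight_shift assms)

lemma tight_rotates:
  assumes "\<And>k. column_dominated x k" "\<And>k. weight x k = 8" "\<And>k r. x k (r mod 4) = x k r"
  shows "x (k + 2) r = x k (r + 2)"
proof -
  have "x (k + 2) 0 = x k 2 \<and> x (k + 2) 1 = x k 3 \<and> x (k + 2) 2 = x k 0 \<and> x (k + 2) 3 = x k 1"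
    using tight_rotates_at_origin[of "\<lambda>j. x (k + j)"] by (simp add: column_dominated_shift weight_shift assms(1,2))
  moreover have "r mod 4 = 0 \<or> r mod 4 = 1 \<or> r mod 4 = 2 \<or> r mod 4 = 3" by presburger
  ultimately have "x (k + 2) (r mod 4) = x k ((r mod 4 + 2) mod 4)" by auto
  then show ?thesis by (metis assms(3) mod_add_left_eq)
qed

lemma sum_periodic_shift:
  fixes f :: "int \<Rightarrow> 'a::comm_monoid_add"
  assumes "0 < p" "\<And>k. f (k mod p) = f k"
  shows "(\<Sum>k = 0..<p. f (k + d)) = (\<Sum>k = 0..<p. f k)"
proof -
  have "(\<Sum>k = 0..<p. f (k + d)) = (\<Sum>k = 0..<p. f ((k + d) mod p))" by (simp add: assms(2))
  also have "\<dots> = (\<Sum>k = 0..<p. f k)"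
    by (rule sum.reindex_bij_witness[where i = "\<lambda>k. (k - d) mod p" and j = "\<lambda>k. (k + d) mod p"])
      (auto simp: assms(1) mod_add_left_eq mod_diff_left_eq)
  finally show ?thesis .
qed

lemma weight_mod:
  assumes "\<And>k. x (k mod p) = x k"
  shows "weight x (k mod p) = weight x k"
proof -
  have "x (k mod p + d) = x (k + d)" "x (k mod p - d) = x (k - d)" for d
    by (metis assms mod_add_left_eq, metis assms mod_diff_left_eq)
  then show ?thesis by (simp add: weight_def column_count_def assms)
qed

lemma sum_weight_periodic:
  assumes "0 < p" "\<And>k. x (k mod p) = x k"
  shows "(\<Sum>k = 0..<p. weight x k) = 16 * (\<Sum>k = 0..<p. column_count x k)"
proof -
  have shift: "(\<Sum>k = 0..<p. column_count x (k + d)) = (\<Sum>k = 0..<p. column_count x k)" for d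
    by (rule sum_periodic_shift) (simp_all add: assms column_count_def)
  have "(\<Sum>k = 0..<p. weight x k) =
      6 * (\<Sum>k = 0..<p. column_count x k)
      + 4 * ((\<Sum>k = 0..<p. column_count x (k - 1)) + (\<Sum>k = 0..<p. column_count x (k + 1)))
      + (\<Sum>k = 0..<p. column_count x (k - 2)) + (\<Sum>k = 0..<p. column_count x (k + 2))"
    by (simp add: weight_def sum.distrib sum_distrib_left)
  also have "\<dots> = 16 * (\<Sum>k = 0..<p. column_count x k)"
    using shift[of 1] shift[of 2] shift[of "-1"] shift[of "-2"] by simp
  finally show ?thesis .
qed

lemma periodic_pattern_count_ge:
  assumes "0 < p" "\<And>k. x (k mod p) = x k" "\<And>k. column_dominated x k"
  shows "p \<le> 2 * (\<Sum>k = 0..<p. column_count x k)"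
proof -
  have "(\<Sum>k = 0..<p. 8) \<le> (\<Sum>k = 0..<p. weight x k)"
    by (rule sum_mono) (rule weight_ge_8[OF assms(3)])
  then show ?thesis using assms(1) sum_weight_periodic[of p x] assms(2) by simp
qed

lemma tight_rotation_invariant:
  assumes "0 < p" "p mod 4 = 2" "\<And>k. x (k mod p) = x k" "\<And>k r. x k (r mod 4) = x k r"
    "\<And>k. column_dominated x k" "\<And>k. weight x k = 8"
  shows "x k (r + 2) = x k r"
proof -
  have iter: "x (k + 2 * int m) r = x k (r + 2 * int m)" for m k r
  proof (induction m arbitrary: k r)
    case (Suc m)
    have "x (k + 2 * int (Suc m)) r = x (k + 2 * int m + 2) r" by (simp add: algebra_simps)
    also have "\<dots> = x (k + 2 * int m) (r + 2)" by (rule tight_rotates[OF assms(5,6,4)])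
    also have "\<dots> = x k (r + 2 * int (Suc m))" using Suc.IH[of k "r + 2"] by (simp add: algebra_simps)
    finally show ?case .
  qed simp
  define m where "m = nat (p div 2)"
  have "p = 2 * (p div 2)" "0 \<le> p div 2" using assms(1,2) by presburger+
  then have m: "p = 2 * int m" unfolding m_def by simp
  have "x (k + p) = x k" by (metis assms(3) mod_add_self2)
  moreover have "x k (r + p) = x k (r + 2)" by (metis assms(2,4) mod_add_right_eq)
  ultimately show ?thesis using iter[where m = m and k = k and r = r] m by simp
qed

lemma periodic_pattern_count_gt:
  assumes "0 < p" "p mod 4 = 2" "\<And>k. x (k mod p) = x k" "\<And>k r. x k (r mod 4) = x k r"
    "\<And>k. column_dominated x k"
  shows "p < 2 * (\<Sum>k = 0..<p. column_count x k)"
proof (rule ccontr)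
  assume "\<not> ?thesis"
  then have "(\<Sum>k = 0..<p. weight x k - 8) = 0"
    using periodic_pattern_count_ge[of p x] sum_weight_periodic[of p x] assms by (simp add: sum_subtractf)
  then have "weight x k = 8" if "k \<in> {0..<p}" for k
    using that sum_nonneg_eq_0_iff[of "{0..<p}" "\<lambda>k. weight x k - 8"] weight_ge_8[OF assms(5)] by simp
  then have tight: "weight x k = 8" for k
    using weight_mod[of x p k] assms(1,3) by simp
  have "x k 2 = x k 0" "x k 3 = x k 1" for k
    using tight_rotation_invariant[OF assms tight, of k 0] tight_rotation_invariant[OF assms tight, of k 1] by simp_all
  then show False
    using no_tight_rotation_invariant_at_origin assms(5) tight by blast
qed

section \<open>The torus C_4 \<box> C_n\<close>

text \<open>The covering map from cylinder coordinates (column k, row r) onto C_4 \<box> C_n, whose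
  vertices are pairs (row, column).\<close>

definition torus_vertex :: "nat \<Rightarrow> int \<Rightarrow> int \<Rightarrow> nat \<times> nat" where
  "torus_vertex n k r = (nat (r mod 4), nat (k mod int n))"

abbreviation torus_V :: "nat \<Rightarrow> (nat \<times> nat) set" where
  "torus_V n \<equiv> cart_V (cycle_V 4) (cycle_V n)"

abbreviation torus_E :: "nat \<Rightarrow> nat \<times> nat \<Rightarrow> nat \<times> nat \<Rightarrow> bool" where
  "torus_E n \<equiv> cart_E (cycle_E 4) (cycle_E n)"

lemma torus_vertex_eq_iff:
  "0 < n \<Longrightarrow> torus_vertex n k r = torus_vertex n k' r' \<longleftrightarrow> int n dvd k - k' \<and> 4 dvd r - r'"
  unfolding torus_vertex_def by (auto simp: mod_eq_dvd_iff[symmetric] eq_nat_nat_iff)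

lemma torus_vertex_in_torus_V: "0 < n \<Longrightarrow> torus_vertex n k r \<in> torus_V n"
  unfolding torus_vertex_def cart_V_def cycle_V_def by (simp add: nat_less_iff)

lemma torus_vertex_of_nat: "j < n \<Longrightarrow> torus_vertex n (int j) r = (nat (r mod 4), j)"
  unfolding torus_vertex_def by (simp add: nat_mod_distrib)

lemma torus_V_eq: "torus_V n = {..<4} \<times> {..<n}"
  unfolding cart_V_def cycle_V_def by auto

lemma cycle_E_mod:
  assumes "0 < n"
  shows "cycle_E n (nat (a mod int n)) (nat (b mod int n)) \<longleftrightarrow> int n dvd b - (a + 1) \<or> int n dvd b - (a - 1)"
proof -
  have succ: "(nat (c mod int n) + 1) mod n = nat ((c + 1) mod int n)" for c
  proof -
    have "int ((nat (c mod int n) + 1) mod n) = (c + 1) mod int n"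
      using assms by (simp add: of_nat_mod mod_add_right_eq add.commute)
    then show ?thesis by (metis nat_int)
  qed
  have "nat (b mod int n) = nat ((a + 1) mod int n) \<longleftrightarrow> int n dvd b - (a + 1)"
    using assms by (simp add: eq_nat_nat_iff mod_eq_dvd_iff)
  moreover have "nat (a mod int n) = nat ((b + 1) mod int n) \<longleftrightarrow> int n dvd b - (a - 1)"
    using assms by (simp add: eq_nat_nat_iff mod_eq_dvd_iff) (metis dvd_minus_iff minus_diff_eq diff_diff_eq2 diff_diff_eq)
  ultimately show ?thesis
    unfolding cycle_E_def succ using assms by (simp add: nat_less_iff)
qed

lemma fst_torus_vertex: "fst (torus_vertex n k r) = nat (r mod 4)"
  and snd_torus_vertex: "snd (torus_vertex n k r) = nat (k mod int n)"
  by (simp_all add: torus_vertex_def)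

lemma torus_E_torus_vertex:
  assumes "0 < n"
  shows "torus_E n (torus_vertex n k r) (torus_vertex n k' r') \<longleftrightarrow>
    torus_vertex n k' r' \<in> {torus_vertex n k (r + 1), torus_vertex n k (r - 1),
      torus_vertex n (k + 1) r, torus_vertex n (k - 1) r}"
proof -
  have "nat (r mod 4) = nat (r' mod 4) \<longleftrightarrow> 4 dvd r' - r"
    by (simp add: eq_nat_nat_iff mod_eq_dvd_iff dvd_diff_commute)
  moreover have "nat (k mod int n) = nat (k' mod int n) \<longleftrightarrow> int n dvd k' - k"
    using assms by (simp add: eq_nat_nat_iff mod_eq_dvd_iff dvd_diff_commute)
  ultimately show ?thesis
    unfolding cart_E_def fst_torus_vertex snd_torus_vertex cycle_E_mod[OF assms] cycle_E_mod[of 4, simplified]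
      torus_vertex_eq_iff[OF assms] insert_iff empty_iff
    by blast
qed

lemma torus_V_cases:
  assumes "w \<in> torus_V n"
  obtains k r where "w = torus_vertex n k r"
proof -
  obtain i j where "w = (i, j)" "i < 4" "j < n" using assms unfolding torus_V_eq by auto
  then have "w = torus_vertex n (int j) (int i)" by (simp add: torus_vertex_of_nat nat_mod_distrib)
  then show ?thesis using that by blast
qed

lemma torus_nbhd:
  assumes "0 < n"
  shows "nbhd (torus_V n) (torus_E n) (torus_vertex n k r) =
    {torus_vertex n k (r + 1), torus_vertex n k (r - 1), torus_vertex n (k + 1) r, torus_vertex n (k - 1) r}"
  unfolding nbhd_def
  by (auto simp: torus_E_torus_vertex[OF assms] torus_vertex_in_torus_V[OF assms] elim!: torus_V_cases)

lemma nbhd2_eq: "nbhd2 V E v = (\<Union>u\<in>nbhd V E v. nbhd V E u) - insert v (nbhd V E v)"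
  unfolding nbhd_def nbhd2_def by auto

lemma not_int_dvd_small: "4 \<le> n \<Longrightarrow> 0 < d \<Longrightarrow> d < 4 \<Longrightarrow> \<not> int n dvd d"
  using zdvd_imp_le[of "int n" d] by linarith

lemma torus_nbhd2:
  assumes "4 \<le> n"
  shows "nbhd2 (torus_V n) (torus_E n) (torus_vertex n k r) =
    {torus_vertex n k (r + 2), torus_vertex n (k + 1) (r + 1), torus_vertex n (k + 1) (r - 1),
     torus_vertex n (k - 1) (r + 1), torus_vertex n (k - 1) (r - 1),
     torus_vertex n (k + 2) r, torus_vertex n (k - 2) r}" (is "_ = ?D")
proof -
  have n: "0 < n" using assms by simp
  let ?v = "torus_vertex n k r" and ?N = "nbhd (torus_V n) (torus_E n) (torus_vertex n k r)"
  have "torus_vertex n k (r - 2) = torus_vertex n k (r + 2)"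
    by (simp add: torus_vertex_eq_iff[OF n])
  then have "(\<Union>u\<in>?N. nbhd (torus_V n) (torus_E n) u) \<subseteq> insert ?v ?D"
    by (simp add: torus_nbhd[OF n] add.commute[of 2])
  moreover have "?D \<subseteq> (\<Union>u\<in>?N. nbhd (torus_V n) (torus_E n) u)"
    by (simp add: torus_nbhd[OF n] add.commute[of 2])
  moreover have "?D \<inter> insert ?v ?N = {}"
    using assms by (simp add: torus_nbhd[OF n] torus_vertex_eq_iff[OF n] not_int_dvd_small)
  ultimately show ?thesis unfolding nbhd2_eq by blast
qed

definition torus_pattern :: "nat \<Rightarrow> (nat \<times> nat) set \<Rightarrow> int \<Rightarrow> int \<Rightarrow> bool" where
  "torus_pattern n S k r \<longleftrightarrow> torus_vertex n k r \<in> S"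

lemma torus_vertex_mod:
  "torus_vertex n (k mod int n) r = torus_vertex n k r" "torus_vertex n k (r mod 4) = torus_vertex n k r"
  by (simp_all add: torus_vertex_def)

lemma card_set_inter_le_sum_list:
  "of_nat (card (set xs \<inter> S)) \<le> (\<Sum>a\<leftarrow>xs. of_bool (a \<in> S) :: 'a::linordered_semidom)"
proof (induction xs)
  case (Cons a xs)
  have "card (set (a # xs) \<inter> S) \<le> of_bool (a \<in> S) + card (set xs \<inter> S)"
    by (simp add: card_insert_if Int_insert_left)
  then have "of_nat (card (set (a # xs) \<inter> S)) \<le> (of_bool (a \<in> S) + of_nat (card (set xs \<inter> S)) :: 'a)"
    by (metis of_nat_add of_nat_le_iff of_nat_of_bool)
  also have "\<dots> \<le> of_bool (a \<in> S) + (\<Sum>a\<leftarrow>xs. of_bool (a \<in> S))"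
    using Cons.IH by (rule add_left_mono)
  finally show ?case by simp
qed simp

lemma torus_pattern_dominated_at:
  assumes "4 \<le> n" "disj_dom_set (torus_V n) (torus_E n) S"
  shows "dominated_at (torus_pattern n S) k r"
proof (cases "torus_vertex n k r \<in> S")
  case True
  then show ?thesis by (simp add: dominated_at_def torus_pattern_def)
next
  case False
  have n: "0 < n" using assms(1) by simp
  then have "torus_vertex n k r \<in> torus_V n - S" using False torus_vertex_in_torus_V by simp
  then have "1 \<le> card (nbhd (torus_V n) (torus_E n) (torus_vertex n k r) \<inter> S) \<or>
      2 \<le> card (nbhd2 (torus_V n) (torus_E n) (torus_vertex n k r) \<inter> S)"
    using assms(2) unfolding disj_dom_set_def by blast
  then show ?thesis
  proof
    assume "1 \<le> card (nbhd (torus_V n) (torus_E n) (torus_vertex n k r) \<inter> S)"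
    then have "nbhd (torus_V n) (torus_E n) (torus_vertex n k r) \<inter> S \<noteq> {}" by auto
    then show ?thesis
      by (auto simp: torus_nbhd[OF n] dominated_at_def torus_pattern_def torus_vertex_mod)
  next
    assume "2 \<le> card (nbhd2 (torus_V n) (torus_E n) (torus_vertex n k r) \<inter> S)"
    then show ?thesis
      using card_set_inter_le_sum_list[where 'a = int, of "[torus_vertex n k (r + 2),
        torus_vertex n (k + 1) (r + 1), torus_vertex n (k + 1) (r - 1), torus_vertex n (k - 1) (r + 1),
        torus_vertex n (k - 1) (r - 1), torus_vertex n (k + 2) r, torus_vertex n (k - 2) r]" S]
      by (simp add: torus_nbhd2[OF assms(1)] dominated_at_def torus_pattern_def torus_vertex_mod)
  qed
qed

lemma card_eq_sum_column_count:
  assumes "S \<subseteq> torus_V n"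
  shows "int (card S) = (\<Sum>k = 0..<int n. column_count (torus_pattern n S) k)"
proof -
  have four: "{..<4::nat} = {0, 1, 2, 3}" by auto
  have "finite (torus_V n)" unfolding torus_V_eq by simp
  then have "int (card S) = (\<Sum>v\<in>torus_V n. of_bool (v \<in> S))"
    using assms by (simp add: Int_absorb1 Int_absorb2)
  also have "\<dots> = (\<Sum>j<n. \<Sum>i<4. of_bool ((i, j) \<in> S))"
    unfolding torus_V_eq sum.cartesian_product' by (rule sum.swap)
  also have "\<dots> = (\<Sum>j<n. column_count (torus_pattern n S) (int j))"
    by (intro sum.cong) (simp_all add: four column_count_def torus_pattern_def torus_vertex_of_nat del: sum_of_bool_eq)
  also have "\<dots> = (\<Sum>k\<in>int ` {..<n}. column_count (torus_pattern n S) k)"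
    by (simp add: sum.reindex)
  also have "int ` {..<n} = {0..<int n}"
    by (simp add: image_int_atLeastLessThan lessThan_atLeast0)
  finally show ?thesis .
qed

lemma torus_pattern_periodic:
  "torus_pattern n S (k mod int n) = torus_pattern n S k"
  "torus_pattern n S k (r mod 4) = torus_pattern n S k r"
  by (simp_all add: torus_pattern_def torus_vertex_mod fun_eq_iff)

lemma column_dominated_torus_pattern:
  "4 \<le> n \<Longrightarrow> disj_dom_set (torus_V n) (torus_E n) S \<Longrightarrow> column_dominated (torus_pattern n S) k"
  using torus_pattern_dominated_at by (simp add: column_dominated_def)

lemma torus_dds_card_ge:
  assumes "4 \<le> n" "disj_dom_set (torus_V n) (torus_E n) S"
  shows "n \<le> 2 * card S"
proof -
  have "S \<subseteq> torus_V n" using assms(2) by (simp add: disj_dom_set_def)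
  moreover have "column_dominated (torus_pattern n S) k" for k
    using column_dominated_torus_pattern[OF assms] .
  ultimately have "int n \<le> 2 * int (card S)"
    using periodic_pattern_count_ge[of "int n" "torus_pattern n S"] assms(1)
    by (simp add: card_eq_sum_column_count torus_pattern_periodic)
  then show ?thesis by simp
qed

lemma torus_dds_card_gt:
  assumes "4 \<le> n" "n mod 4 = 2" "disj_dom_set (torus_V n) (torus_E n) S"
  shows "n < 2 * card S"
proof -
  have "S \<subseteq> torus_V n" using assms(3) by (simp add: disj_dom_set_def)
  moreover have "column_dominated (torus_pattern n S) k" for k
    using column_dominated_torus_pattern[OF assms(1,3)] .
  moreover have "int n mod 4 = 2" using assms(2) by presburger
  ultimately have "int n < 2 * int (card S)"
    using periodic_pattern_count_gt[of "int n" "torus_pattern n S"] assms(1)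
    by (simp add: card_eq_sum_column_count torus_pattern_periodic)
  then show ?thesis by simp
qed

section \<open>A dominating set of optimal size\<close>

text \<open>Row 0 in the columns \<equiv> 0 and row 2 in the columns \<equiv> 2 (mod 4); for n \<equiv> 2 (mod 4) the
  vertex (2, 0) repairs the seam between the columns n - 1 and 0.\<close>

definition optimal_dds :: "nat \<Rightarrow> (nat \<times> nat) set" where
  "optimal_dds n = (\<lambda>m. (2 * (m mod 2), 2 * m)) ` {..<(n + 1) div 2} \<union> (if n mod 4 = 2 then {(2, 0)} else {})"

lemma card_optimal_dds: "card (optimal_dds n) = (if n mod 4 = 2 then n div 2 + 1 else (n + 1) div 2)"
proof -
  let ?A = "(\<lambda>m. (2 * (m mod 2), 2 * m)) ` {..<(n + 1) div 2}"
  have "inj_on (\<lambda>m. (2 * (m mod 2), 2 * m)) {..<(n + 1) div 2}" by (auto simp: inj_on_def)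
  then have card_A: "card ?A = (n + 1) div 2" by (simp add: card_image)
  show ?thesis
  proof (cases "n mod 4 = 2")
    case True
    have "(2, 0) \<notin> ?A" by auto
    then have "card (optimal_dds n) = card ?A + 1" unfolding optimal_dds_def using True by simp
    moreover have "(n + 1) div 2 = n div 2" using True by presburger
    ultimately show ?thesis using True card_A by simp
  next
    case False
    then show ?thesis unfolding optimal_dds_def using card_A by simp
  qed
qed

lemma optimal_dds_subset: "optimal_dds n \<subseteq> torus_V n"
  unfolding optimal_dds_def torus_V_eq by auto

lemma diagonal_in_optimal_dds:
  assumes "0 < n" "even c" "0 \<le> c" "c \<le> int n"
  shows "torus_vertex n c c \<in> optimal_dds n"
proof -
  obtain j where j: "c = int j" using assms(3) nonneg_int_cases by blast
  let ?f = "\<lambda>m. (2 * (m mod 2), 2 * m)"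
  have "torus_vertex n c c \<in> ?f ` {..<(n + 1) div 2} \<or> n mod 4 = 2 \<and> torus_vertex n c c = (2, 0)"
  proof (cases "j < n")
    case True
    then have "torus_vertex n c c = ?f (j div 2)" "j div 2 < (n + 1) div 2"
      using assms(2) unfolding j by (simp_all add: torus_vertex_of_nat nat_mod_distrib) presburger+
    then show ?thesis by blast
  next
    case False
    then have "j = n" using assms(4) j by simp
    show ?thesis
    proof (cases "n mod 4 = 2")
      case True
      then show ?thesis unfolding j \<open>j = n\<close> torus_vertex_def by (simp add: nat_mod_distrib)
    next
      case False
      then have "torus_vertex n c c = ?f 0"
        using assms(2) unfolding j \<open>j = n\<close> torus_vertex_def by (simp add: nat_mod_distrib) presburger
      moreover have "0 < (n + 1) div 2" using assms(1) by simp
      ultimately show ?thesis by blast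
    qed
  qed
  then show ?thesis unfolding optimal_dds_def by auto
qed

lemma one_le_card_Int: "finite A \<Longrightarrow> w \<in> A \<Longrightarrow> w \<in> S \<Longrightarrow> 1 \<le> card (A \<inter> S)"
  by (metis IntI card_0_eq empty_iff finite_Int less_one not_le)

lemma two_le_card_Int:
  assumes "finite A" "w \<in> A" "w' \<in> A" "w \<in> S" "w' \<in> S" "w \<noteq> w'"
  shows "2 \<le> card (A \<inter> S)"
proof -
  have "card {w, w'} \<le> card (A \<inter> S)" using assms by (intro card_mono) auto
  then show ?thesis using assms(6) by simp
qed

lemma optimal_dds_dominates_opposite:
  assumes "4 \<le> n" "j < n" "even j" "4 dvd r - int j - 2"
  shows "2 \<le> card (nbhd2 (torus_V n) (torus_E n) (torus_vertex n (int j) r) \<inter> optimal_dds n)"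
proof -
  let ?k = "int j"
  have n: "0 < n" using assms(1) by simp
  obtain c where c: "c = ?k - 2 \<or> c = ?k + 2" "even c" "0 \<le> c" "c \<le> int n"
  proof (cases "2 \<le> j")
    case True
    then show ?thesis using assms(2,3) by (intro that[of "?k - 2"]) auto
  next
    case False
    then have "j = 0" using assms(3) by presburger
    then show ?thesis using assms(1) by (intro that[of "?k + 2"]) auto
  qed
  have "torus_vertex n ?k (r + 2) = torus_vertex n ?k ?k"
    using assms(4) by (simp add: torus_vertex_eq_iff[OF n]; presburger)
  moreover have "torus_vertex n c r = torus_vertex n c c"
    using assms(4) c(1) by (simp add: torus_vertex_eq_iff[OF n]; presburger)
  moreover have "torus_vertex n ?k (r + 2) \<noteq> torus_vertex n c r"
    using c(1) assms(1) by (auto simp: torus_vertex_eq_iff[OF n] not_int_dvd_small)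
  ultimately show ?thesis
    using diagonal_in_optimal_dds[OF n c(2-4)] diagonal_in_optimal_dds[OF n, of ?k] assms(2,3) c(1)
    by (intro two_le_card_Int[of _ "torus_vertex n ?k (r + 2)" "torus_vertex n c r"])
      (auto simp: torus_nbhd2[OF assms(1)])
qed

lemma optimal_dds_dominates_even_column:
  assumes "4 \<le> n" "j < n" "even j" "torus_vertex n (int j) r \<notin> optimal_dds n"
  shows "1 \<le> card (nbhd (torus_V n) (torus_E n) (torus_vertex n (int j) r) \<inter> optimal_dds n) \<or>
    2 \<le> card (nbhd2 (torus_V n) (torus_E n) (torus_vertex n (int j) r) \<inter> optimal_dds n)"
proof -
  let ?k = "int j"
  have n: "0 < n" using assms(1) by simp
  have diag: "torus_vertex n ?k ?k \<in> optimal_dds n"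
    using diagonal_in_optimal_dds[OF n] assms(2,3) by simp
  then have "torus_vertex n ?k r \<noteq> torus_vertex n ?k ?k" using assms(4) by auto
  then have "\<not> 4 dvd r - ?k" by (simp add: torus_vertex_eq_iff[OF n])
  then have "4 dvd r - ?k - 1 \<or> 4 dvd r - ?k + 1 \<or> 4 dvd r - ?k - 2" by presburger
  then consider "4 dvd r - ?k - 1" | "4 dvd r - ?k + 1" | "4 dvd r - ?k - 2" by blast
  then show ?thesis
  proof cases
    case 1
    then have "torus_vertex n ?k (r - 1) = torus_vertex n ?k ?k"
      by (simp add: torus_vertex_eq_iff[OF n]; presburger)
    then show ?thesis
      using diag by (intro disjI1 one_le_card_Int) (simp_all add: torus_nbhd[OF n])
  next
    case 2
    then have "torus_vertex n ?k (r + 1) = torus_vertex n ?k ?k"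
      by (simp add: torus_vertex_eq_iff[OF n]; presburger)
    then show ?thesis
      using diag by (intro disjI1 one_le_card_Int) (simp_all add: torus_nbhd[OF n])
  next
    case 3
    then show ?thesis using optimal_dds_dominates_opposite[OF assms(1-3)] by blast
  qed
qed

lemma optimal_dds_dominates_odd_column:
  assumes "4 \<le> n" "j < n" "odd j"
  shows "1 \<le> card (nbhd (torus_V n) (torus_E n) (torus_vertex n (int j) r) \<inter> optimal_dds n) \<or>
    2 \<le> card (nbhd2 (torus_V n) (torus_E n) (torus_vertex n (int j) r) \<inter> optimal_dds n)"
proof -
  let ?S = "optimal_dds n" and ?k = "int j"
  have n: "0 < n" using assms(1) by simp
  have left: "torus_vertex n (?k - 1) (?k - 1) \<in> ?S" and right: "torus_vertex n (?k + 1) (?k + 1) \<in> ?S"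
    using assms(2,3) by (auto intro!: diagonal_in_optimal_dds[OF n] elim!: oddE)
  have "4 dvd r - ?k + 1 \<or> 4 dvd r - ?k - 1 \<or> 4 dvd r - ?k \<or> 4 dvd r - ?k - 2" by presburger
  then consider "4 dvd r - ?k + 1" | "4 dvd r - ?k - 1" | "4 dvd r - ?k" | "4 dvd r - ?k - 2" by blast
  then show ?thesis
  proof cases
    case 1
    then have "torus_vertex n (?k - 1) r = torus_vertex n (?k - 1) (?k - 1)"
      by (simp add: torus_vertex_eq_iff[OF n]; presburger)
    then show ?thesis
      using left by (intro disjI1 one_le_card_Int) (simp_all add: torus_nbhd[OF n])
  next
    case 2
    then have "torus_vertex n (?k + 1) r = torus_vertex n (?k + 1) (?k + 1)"
      by (simp add: torus_vertex_eq_iff[OF n]; presburger)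
    then show ?thesis
      using right by (intro disjI1 one_le_card_Int) (simp_all add: torus_nbhd[OF n])
  next
    case 3
    have "torus_vertex n (?k - 1) (r - 1) = torus_vertex n (?k - 1) (?k - 1)"
      using 3 by (simp add: torus_vertex_eq_iff[OF n]; presburger)
    moreover have "torus_vertex n (?k + 1) (r + 1) = torus_vertex n (?k + 1) (?k + 1)"
      using 3 by (simp add: torus_vertex_eq_iff[OF n]; presburger)
    moreover have "torus_vertex n (?k - 1) (r - 1) \<noteq> torus_vertex n (?k + 1) (r + 1)"
      using assms(1) by (simp add: torus_vertex_eq_iff[OF n] not_int_dvd_small)
    ultimately show ?thesis
      using left right by (intro disjI2 two_le_card_Int) (simp_all add: torus_nbhd2[OF assms(1)])
  next
    case 4
    have "torus_vertex n (?k - 1) (r + 1) = torus_vertex n (?k - 1) (?k - 1)"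
      using 4 by (simp add: torus_vertex_eq_iff[OF n]; presburger)
    moreover have "torus_vertex n (?k + 1) (r - 1) = torus_vertex n (?k + 1) (?k + 1)"
      using 4 by (simp add: torus_vertex_eq_iff[OF n]; presburger)
    moreover have "torus_vertex n (?k - 1) (r + 1) \<noteq> torus_vertex n (?k + 1) (r - 1)"
      using assms(1) by (simp add: torus_vertex_eq_iff[OF n] not_int_dvd_small)
    ultimately show ?thesis
      using left right by (intro disjI2 two_le_card_Int) (simp_all add: torus_nbhd2[OF assms(1)])
  qed
qed

lemma optimal_dds_is_dds:
  assumes "4 \<le> n"
  shows "disj_dom_set (torus_V n) (torus_E n) (optimal_dds n)"
  unfolding disj_dom_set_def
proof (intro conjI optimal_dds_subset ballI)
  fix v assume v: "v \<in> torus_V n - optimal_dds n"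
  then obtain i j where "v = (i, j)" "i < 4" "j < n" unfolding torus_V_eq by auto
  then have v_eq: "v = torus_vertex n (int j) (int i)" by (simp add: torus_vertex_of_nat nat_mod_distrib)
  show "1 \<le> card (nbhd (torus_V n) (torus_E n) v \<inter> optimal_dds n) \<or>
      2 \<le> card (nbhd2 (torus_V n) (torus_E n) v \<inter> optimal_dds n)"
    using optimal_dds_dominates_even_column[OF assms \<open>j < n\<close>] optimal_dds_dominates_odd_column[OF assms \<open>j < n\<close>]
      v unfolding v_eq by blast
qed

lemma disj_dom_num_eqI:
  assumes "disj_dom_set V E S" "card S = m" "\<And>T. disj_dom_set V E T \<Longrightarrow> m \<le> card T"
  shows "disj_dom_num V E = m"
  unfolding disj_dom_num_def using assms by (intro Least_equality) auto

theorem theorem3: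
  fixes n :: nat
  assumes "n \<ge> 4"
  shows "disj_dom_num (cart_V (cycle_V 4) (cycle_V n)) (cart_E (cycle_E 4) (cycle_E n)) =
    (if n mod 4 = 2 then n div 2 + 1 else (n + 1) div 2)"
proof (rule disj_dom_num_eqI[OF optimal_dds_is_dds[OF assms] card_optimal_dds])
  fix T assume "disj_dom_set (torus_V n) (torus_E n) T"
  then have "n \<le> 2 * card T" "n mod 4 = 2 \<Longrightarrow> n < 2 * card T"
    using torus_dds_card_ge[OF assms] torus_dds_card_gt[OF assms] by auto
  then show "(if n mod 4 = 2 then n div 2 + 1 else (n + 1) div 2) \<le> card T" by presburger
qed

end
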